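(* Let $(N^\circ,M^\circ,L^\circ)\in OLag(V)^3$ be pairwise in general position, let $r^L:M\to N$ be the linear map with $r^L(m)-m\in L$ for all $m\in M$, and $r^L_\wedge:\bigwedge^nM\to\bigwedge^nN$ the induced map. Then $$\omega_\wedge\big(r^L_\wedge(o_M),o_M\big)=(-1)^n\,\omega_\wedge(o_M,o_N)\,\omega_\wedge(o_L,o_M)\,\omega_\wedge(o_L,o_N)^{-1}.$$
   Context: $(V,\omega)$ is a symplectic vector space of dimension $2n$ over $\mathbb F_q$, $q$ odd. An oriented Lagrangian is a pair $L^\circ=(L,o_L)$ with $L$ Lagrangian and $o_L\in\bigwedge^nL$ nonzero; $OLag(V)$ is the set of these. Lagrangians $M,L$ are in general position if $M+L=V$. For Lagrangians $A,B$ in a $2k$-dimensional symplectic space, $\omega_\wedge:\bigwedge^kA\times\bigwedge^kB\to\mathbb F_q$ is $\omega_\wedge(a_1\wedge\dots\wedge a_k,b_1\wedge\dots\wedge b_k)=(-1)^{k(k-1)/2}\det(\omega(a_i,b_j))_{i,j}$. *)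

theory Defs
  imports "HOL-Analysis.Analysis"
begin

text \<open>The symplectic space V is modelled as 'a^'m over a finite field 'a of odd order,
  with CARD('m) = 2n.  Bases of n-dimensional (Lagrangian) subspaces are indexed by a
  finite type 'n with CARD('n) = n.\<close>

definition symplectic_form :: "('a::field^'m \<Rightarrow> 'a^'m \<Rightarrow> 'a) \<Rightarrow> bool" where
  "symplectic_form \<omega> \<longleftrightarrow>
     (\<forall>x y z. \<omega> (x + y) z = \<omega> x z + \<omega> y z) \<and>
     (\<forall>x y z. \<omega> x (y + z) = \<omega> x y + \<omega> x z) \<and>
     (\<forall>c x y. \<omega> (c *s x) y = c * \<omega> x y) \<and>
     (\<forall>c x y. \<omega> x (c *s y) = c * \<omega> x y) \<and>
     (\<forall>x. \<omega> x x = 0) \<and>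
     (\<forall>x. (\<forall>y. \<omega> x y = 0) \<longrightarrow> x = 0)"

definition lagrangian :: "('a::field^'m \<Rightarrow> 'a^'m \<Rightarrow> 'a) \<Rightarrow> ('a^'m) set \<Rightarrow> bool" where
  "lagrangian \<omega> L \<longleftrightarrow> vec.subspace L \<and> 2 * vec.dim L = CARD('m) \<and>
     (\<forall>x\<in>L. \<forall>y\<in>L. \<omega> x y = 0)"

text \<open>An orientation o_L (a nonzero element of the top exterior power of L) is represented
  by an ordered basis b of L, standing for b_1 \<and> ... \<and> b_n.\<close>

definition ordered_basis_of :: "('a::field^'m) set \<Rightarrow> ('n::finite \<Rightarrow> 'a^'m) \<Rightarrow> bool" where
  "ordered_basis_of L b \<longleftrightarrow> inj b \<and> vec.independent (range b) \<and> vec.span (range b) = L"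

definition oriented_lagrangian ::
  "('a::field^'m \<Rightarrow> 'a^'m \<Rightarrow> 'a) \<Rightarrow> ('a^'m) set \<Rightarrow> ('n::finite \<Rightarrow> 'a^'m) \<Rightarrow> bool" where
  "oriented_lagrangian \<omega> L b \<longleftrightarrow> lagrangian \<omega> L \<and> ordered_basis_of L b"

definition general_position :: "('a::field^'m) set \<Rightarrow> ('a^'m) set \<Rightarrow> bool" where
  "general_position L M \<longleftrightarrow> {x + y | x y. x \<in> L \<and> y \<in> M} = UNIV"

definition omega_wedge ::
  "('a::field^'m \<Rightarrow> 'a^'m \<Rightarrow> 'a) \<Rightarrow> ('n::finite \<Rightarrow> 'a^'m) \<Rightarrow> ('n \<Rightarrow> 'a^'m) \<Rightarrow> 'a" where
  "omega_wedge \<omega> a b =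
     (-1) ^ (CARD('n) * (CARD('n) - 1) div 2) * det (\<chi> i j. \<omega> (a i) (b j))"

end

theory Submission
  imports Defs
begin

(* Write G(a,b) for the Gram matrix (omega(a_i, b_j))_{i,j} of two families
   of n vectors, so that omega_wedge(a,b) = s * det G(a,b) with the sign s = +-1.
   Expand r(m_i) - m_i = sum_p C_ip l_p in the basis l of L.  Since M and N are isotropic
   and r(m_i) lies in N,
     G(r o m, m) = C * G(l, m)     and     -G(m, n) = C * G(l, n).
   Taking determinants and eliminating det C gives
     det G(r o m, m) * det G(l, n) = (-1)^n * det G(m, n) * det G(l, m),
   an identity needing no transversality.  Transversality of N and L together with
   nondegeneracy of omega makes det G(l, n) nonzero, so one can divide by it; the sign s
   cancels because s^2 = 1.  The file establishes, in order: bilinearity consequences of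
   a symplectic form, coordinates with respect to an ordered basis, the Gram-matrix
   calculus, the nonsingularity of G(l, n), the determinant identity, and the theorem. *)

lemma symplectic_add_left: "symplectic_form \<omega> \<Longrightarrow> \<omega> (x + y) z = \<omega> x z + \<omega> y z"
  by (simp add: symplectic_form_def)

lemma symplectic_add_right: "symplectic_form \<omega> \<Longrightarrow> \<omega> z (x + y) = \<omega> z x + \<omega> z y"
  by (simp add: symplectic_form_def)

lemma symplectic_nondegenerate: "symplectic_form \<omega> \<Longrightarrow> (\<And>y. \<omega> x y = 0) \<Longrightarrow> x = 0"
  by (simp add: symplectic_form_def)

lemma symplectic_zero_left:
  assumes "symplectic_form \<omega>" shows "\<omega> 0 y = 0"
proof -
  have "\<omega> 0 y = \<omega> (0 *s 0) y" by simp
  also have "\<dots> = 0" using assms by (simp only: symplectic_form_def) simp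
  finally show ?thesis .
qed

lemma symplectic_zero_right:
  assumes "symplectic_form \<omega>" shows "\<omega> y 0 = 0"
proof -
  have "\<omega> y 0 = \<omega> y (0 *s 0)" by simp
  also have "\<dots> = 0" using assms by (simp only: symplectic_form_def) simp
  finally show ?thesis .
qed

lemma symplectic_lincomb_left:
  assumes "symplectic_form \<omega>"
  shows "\<omega> (\<Sum>p\<in>S. c p *s b p) y = (\<Sum>p\<in>S. c p * \<omega> (b p) y)"
  using assms
  by (induction S rule: infinite_finite_induct)
    (simp_all add: symplectic_zero_left, simp add: symplectic_form_def)

lemma symplectic_lincomb_right:
  assumes "symplectic_form \<omega>"
  shows "\<omega> y (\<Sum>p\<in>S. c p *s b p) = (\<Sum>p\<in>S. c p * \<omega> y (b p))"
  using assms
  by (induction S rule: infinite_finite_induct)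
    (simp_all add: symplectic_zero_right, simp add: symplectic_form_def)

lemma span_coordinates:
  fixes b :: "'n::finite \<Rightarrow> 'a::field^'m"
  assumes "inj b" "x \<in> vec.span (range b)"
  obtains c where "x = (\<Sum>p\<in>UNIV. c p *s b p)"
proof -
  obtain u where "x = (\<Sum>v\<in>range b. u v *s v)"
    using assms(2) vec.span_finite[of "range b"] by auto
  also have "\<dots> = (\<Sum>p\<in>UNIV. u (b p) *s b p)"
    using sum.reindex[OF assms(1), of "\<lambda>v. u v *s v"] by simp
  finally show ?thesis by (rule that)
qed

lemma independent_coordinates_zero:
  fixes b :: "'n::finite \<Rightarrow> 'a::field^'m"
  assumes "inj b" "vec.independent (range b)" "(\<Sum>p\<in>UNIV. x p *s b p) = 0"
  shows "x p = 0"
proof -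
  let ?u = "\<lambda>v. x (inv b v)"
  have "(\<Sum>v\<in>range b. ?u v *s v) = (\<Sum>p\<in>UNIV. ?u (b p) *s b p)"
    using sum.reindex[OF assms(1), of "\<lambda>v. ?u v *s v"] by simp
  also have "\<dots> = 0" using assms(1,3) by simp
  finally have "?u (b p) = 0"
    using vec.independentD[OF assms(2), of "range b" ?u "b p"] by simp
  then show ?thesis using assms(1) by simp
qed

lemma lincomb_in_span: "(\<Sum>p\<in>UNIV. c p *s b p) \<in> vec.span (range b)"
  by (intro vec.span_sum vec.span_scale vec.span_base) simp

definition gram :: "('a::field^'m \<Rightarrow> 'a^'m \<Rightarrow> 'a) \<Rightarrow> ('n::finite \<Rightarrow> 'a^'m)
    \<Rightarrow> ('n \<Rightarrow> 'a^'m) \<Rightarrow> 'a^'n^'n" where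
  "gram \<omega> a b = (\<chi> i j. \<omega> (a i) (b j))"

definition wedge_sign :: "'n::finite itself \<Rightarrow> 'a::comm_ring_1" where
  "wedge_sign _ = (-1) ^ (CARD('n) * (CARD('n) - 1) div 2)"

lemma omega_wedge_gram: "omega_wedge \<omega> a b = wedge_sign TYPE('n) * det (gram \<omega> a b)"
  for a b :: "'n::finite \<Rightarrow> 'a::field^'m"
  by (simp add: omega_wedge_def wedge_sign_def gram_def)

lemma wedge_sign_square: "wedge_sign TYPE('n::finite) * wedge_sign TYPE('n) = (1::'a::comm_ring_1)"
  by (simp add: wedge_sign_def flip: power_add power_mult_distrib)

lemma gram_lincomb_left:
  assumes "symplectic_form \<omega>" "\<And>i. a i = (\<Sum>p\<in>UNIV. c i p *s b p)"
  shows "gram \<omega> a d = (\<chi> i p. c i p) ** gram \<omega> b d"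
  by (simp add: gram_def matrix_matrix_mult_def assms symplectic_lincomb_left vec_eq_iff)

lemma det_uminus_matrix:
  fixes X :: "'a::comm_ring_1^'n::finite^'n"
  shows "det (- X) = (-1) ^ CARD('n) * det X"
proof -
  have "- X = (\<chi> i. (-1) *s (X$i))" by (simp add: vec_eq_iff)
  then show ?thesis using det_rows_mul[of "\<lambda>i. -1" "\<lambda>i. X$i"] by simp
qed

lemma isotropic_orthogonal_to_complement:
  assumes "symplectic_form \<omega>" "\<forall>x\<in>L. \<forall>y\<in>L. \<omega> x y = 0" "general_position N L"
    and "v \<in> L" "\<And>x. x \<in> N \<Longrightarrow> \<omega> v x = 0"
  shows "v = 0"
proof (rule symplectic_nondegenerate[OF assms(1)])
  fix y
  obtain a b where "y = a + b" "a \<in> N" "b \<in> L"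
    using assms(3) unfolding general_position_def by blast
  then show "\<omega> v y = 0" using assms by (simp add: symplectic_add_right)
qed

lemma gram_transversal_nonsingular:
  fixes l d :: "'n::finite \<Rightarrow> 'a::field^'m"
  assumes "symplectic_form \<omega>" "\<forall>x\<in>L. \<forall>y\<in>L. \<omega> x y = 0" "general_position N L"
    and "ordered_basis_of L l" "ordered_basis_of N d"
  shows "det (gram \<omega> l d) \<noteq> 0"
proof -
  have l: "inj l" "vec.independent (range l)" "vec.span (range l) = L"
    and d: "inj d" "vec.span (range d) = N"
    using assms(4,5) by (auto simp: ordered_basis_of_def)
  have "x i = 0" if rows: "(\<Sum>i\<in>UNIV. x i *s row i (gram \<omega> l d)) = 0" for x i
  proof -
    define v where "v = (\<Sum>p\<in>UNIV. x p *s l p)"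
    have v_basis: "\<omega> v (d j) = 0" for j
      using arg_cong[OF rows, of "\<lambda>w. w $ j"]
      by (simp add: v_def symplectic_lincomb_left[OF assms(1)] gram_def row_def)
    have "\<omega> v y = 0" if "y \<in> N" for y
    proof -
      obtain e where "y = (\<Sum>p\<in>UNIV. e p *s d p)"
        using span_coordinates[OF d(1)] \<open>y \<in> N\<close> d(2) by metis
      then show ?thesis by (simp add: symplectic_lincomb_right[OF assms(1)] v_basis)
    qed
    moreover have "v \<in> L" unfolding v_def l(3)[symmetric] by (rule lincomb_in_span)
    ultimately have "v = 0" using isotropic_orthogonal_to_complement assms(1-3) by blast
    then show ?thesis using independent_coordinates_zero[OF l(1,2), of x] v_def by simp
  qed
  then have "invertible (gram \<omega> l d)"
    unfolding invertible_right_inverse matrix_right_invertible_independent_rows by blast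
  then show ?thesis by (simp add: invertible_det_nz)
qed

lemma gram_det_identity:
  fixes m n l :: "'k::finite \<Rightarrow> 'a::field^'d"
  assumes sf: "symplectic_form \<omega>"
    and l: "inj l" and shift: "\<And>i. r (m i) - m i \<in> vec.span (range l)"
    and m_isotropic: "\<And>i j. \<omega> (m i) (m j) = 0"
    and r_orth: "\<And>i j. \<omega> (r (m i)) (n j) = 0"
  shows "det (gram \<omega> (r \<circ> m) m) * det (gram \<omega> l n)
    = (-1) ^ CARD('k) * det (gram \<omega> m n) * det (gram \<omega> l m)"
proof -
  have "\<forall>i. \<exists>c. r (m i) - m i = (\<Sum>p\<in>UNIV. c p *s l p)"
    using span_coordinates[OF l shift] by metis
  then obtain c where c: "\<And>i. r (m i) - m i = (\<Sum>p\<in>UNIV. c i p *s l p)"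
    by metis
  define C where "C = (\<chi> i p. c i p)"
  have split: "\<omega> (r (m i)) y = \<omega> (r (m i) - m i) y + \<omega> (m i) y" for i y
    using symplectic_add_left[OF sf, of "r (m i) - m i" "m i" y] by simp
  have "gram \<omega> (r \<circ> m) m = gram \<omega> (\<lambda>i. r (m i) - m i) m"
    by (simp add: gram_def split m_isotropic)
  also have "\<dots> = C ** gram \<omega> l m"
    unfolding C_def by (rule gram_lincomb_left[OF sf c])
  finally have rm: "gram \<omega> (r \<circ> m) m = C ** gram \<omega> l m" .
  have "\<omega> (r (m i) - m i) (n j) = - \<omega> (m i) (n j)" for i j
    using split[of i "n j"] r_orth[of i j] by (simp add: eq_neg_iff_add_eq_0)
  then have "- gram \<omega> m n = gram \<omega> (\<lambda>i. r (m i) - m i) n"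
    by (simp add: gram_def vec_eq_iff)
  also have "\<dots> = C ** gram \<omega> l n"
    unfolding C_def by (rule gram_lincomb_left[OF sf c])
  finally have mn: "- gram \<omega> m n = C ** gram \<omega> l n" .
  have "det (gram \<omega> (r \<circ> m) m) * det (gram \<omega> l n)
      = det (C ** gram \<omega> l n) * det (gram \<omega> l m)"
    by (simp add: rm det_mul)
  also have "\<dots> = (-1) ^ CARD('k) * det (gram \<omega> m n) * det (gram \<omega> l m)"
    by (simp flip: mn add: det_uminus_matrix)
  finally show ?thesis .
qed

theorem mainTheorem4:
  fixes \<omega> :: "'a::{field,finite}^'m \<Rightarrow> 'a^'m \<Rightarrow> 'a"
    and N M L :: "('a^'m) set"
    and oN oM oL :: "'n::finite \<Rightarrow> 'a^'m"
    and r :: "'a^'m \<Rightarrow> 'a^'m"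
  assumes "odd CARD('a)"
    and "CARD('m) = 2 * CARD('n)"
    and "symplectic_form \<omega>"
    and "oriented_lagrangian \<omega> N oN"
    and "oriented_lagrangian \<omega> M oM"
    and "oriented_lagrangian \<omega> L oL"
    and "general_position N M" and "general_position M L" and "general_position N L"
    and "\<forall>m\<in>M. r m \<in> N \<and> r m - m \<in> L"
  shows "omega_wedge \<omega> (r \<circ> oM) oM =
    (-1) ^ CARD('n) * omega_wedge \<omega> oM oN * omega_wedge \<omega> oL oM
      * inverse (omega_wedge \<omega> oL oN)"
proof -
  have basis_in: "b i \<in> X" if "ordered_basis_of X b" for X and b :: "'n \<Rightarrow> 'a^'m" and i
    using that vec.span_base[of "b i" "range b"] by (auto simp: ordered_basis_of_def)
  note N = assms(4)[unfolded oriented_lagrangian_def lagrangian_def]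
  note M = assms(5)[unfolded oriented_lagrangian_def lagrangian_def]
  note L = assms(6)[unfolded oriented_lagrangian_def lagrangian_def]
  have identity: "det (gram \<omega> (r \<circ> oM) oM) * det (gram \<omega> oL oN)
      = (-1) ^ CARD('n) * det (gram \<omega> oM oN) * det (gram \<omega> oL oM)"
    using L M N assms(10) basis_in
    by (intro gram_det_identity[OF assms(3)]) (auto simp: ordered_basis_of_def)
  have "det (gram \<omega> oL oN) \<noteq> 0"
    using L N by (intro gram_transversal_nonsingular[OF assms(3) _ assms(9)]) auto
  with identity wedge_sign_square[where 'n='n and 'a='a] show ?thesis
    by (simp add: omega_wedge_gram field_simps)
qed

end
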